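(* Let $\beta>1$, $\alpha\in(1,2)$ and let $f:\mathbb{N}\times\mathbb{R}_+\to\mathbb{R}$ satisfy $f(1,\lambda)\asymp\lambda^\alpha$. Suppose there exist integers $n_k\nearrow\infty$ and $a_n=n^{1/\alpha}L(n)$ with $L$ slowly varying at $\infty$ such that for every $l\in\mathbb{N}$ and $\lambda>0$, \[n_k\log\Big(\mathbf{E}\Big[E^\omega\Big[\exp\Big(-\tfrac{\lambda}{a_{n_k}}(\eta_0-\mathbb{E}[\eta_0])\Big)\Big]^l\Big]\Big)\to f(l,\lambda)\quad\text{as }k\to\infty.\] Then for each $\lambda>0$ there exist constants $c,C$ depending only on $\lambda$ such that for all sufficiently large $k$ (independently of $l$) and all $l\in\mathbb{N}$, \[cl\ \le\ n_k\log\Big(\mathbf{E}\Big[E^\omega\Big[\exp\Big(-\tfrac{\lambda}{a_{n_k}}(\eta_0-\mathbb{E}[\eta_0])\Big)\Big]^l\Big]\Big)\ \le\ Cl^2.\]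
   Context: Fix $\beta\ge1$ and a law $\pi$ on the set of probability measures on $(0,\infty)$. An environment $\omega=(\omega_x)_{x\in\mathbb{Z}}$ has law $\mathbf{P}:=\pi^{\otimes\mathbb{Z}}$ (expectation $\mathbf{E}$). Under the quenched law $P^\omega$ (expectation $E^\omega$), $\eta_0$ is a random variable with law $\omega_0$. The annealed law is $\mathbb{P}=\int P^\omega\,\mathbf{P}(d\omega)$ with expectation $\mathbb{E}$ (so $\mathbb{E}[\eta_0]=\mathbf{E}[\int u\,\omega_0(du)]$). $f(1,\lambda)\asymp\lambda^\alpha$ means $c'\lambda^\alpha\le f(1,\lambda)\le C'\lambda^\alpha$ for all $\lambda>0$, for some constants $0<c'\le C'<\infty$. *)

theory Defs
  imports "HOL-Probability.Probability"
begin

text \<open>State space of \<open>\<eta>\<^sub>0\<close>: the half-line (0,\<infinity>) with its Borel sets.\<close>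
definition pos_line :: "real measure" where
  "pos_line = restrict_space borel {0<..}"

text \<open>Annealed mean \<open>\<bbbE>[\<eta>\<^sub>0] = \<^bold>E[\<integral> u \<omega>\<^sub>0(du)]\<close>, where \<open>\<pi>\<close> is the law of \<open>\<omega>\<^sub>0\<close>.\<close>
definition annealed_mean :: "real measure measure \<Rightarrow> real" where
  "annealed_mean \<pi> = (\<integral>\<mu>. (\<integral>u. u \<partial>\<mu>) \<partial>\<pi>)"

definition lap_moment :: "real measure measure \<Rightarrow> real \<Rightarrow> real \<Rightarrow> nat \<Rightarrow> real" where
  "lap_moment \<pi> a lam l =
     (\<integral>\<mu>. (\<integral>u. exp (- (lam / a) * (u - annealed_mean \<pi>)) \<partial>\<mu>) ^ l \<partial>\<pi>)"

definition slowly_varying :: "(real \<Rightarrow> real) \<Rightarrow> bool" where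
  "slowly_varying L \<longleftrightarrow> (\<forall>\<^sub>F x in at_top. L x > 0) \<and>
     (\<forall>c>0. ((\<lambda>x. L (c * x) / L x) \<longlongrightarrow> 1) at_top)"

end

theory Submission
  imports Defs
begin

text \<open>Write \<open>M\<^sub>l = \<^bold>E[Y\<^sup>l]\<close> with \<open>Y = E\<^sup>\<omega>[exp (-t (\<eta>\<^sub>0 - m))]\<close>, \<open>t = \<lambda> / a(n\<^sub>k)\<close> and
  \<open>m = \<bbbE>[\<eta>\<^sub>0] \<ge> 0\<close>. Jensen's inequality gives \<open>M\<^sub>l \<ge> M\<^sub>1\<^sup>l\<close>, hence
  \<open>n\<^sub>k log M\<^sub>l \<ge> l n\<^sub>k log M\<^sub>1\<close>, and \<open>n\<^sub>k log M\<^sub>1 \<rightarrow> f(1,\<lambda>) > 0\<close>.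
  For the upper bound, \<open>z = exp(-tm) Y \<in> (0,1]\<close> and the truncated binomial bound
  \<open>z\<^sup>l \<le> 1 - l(1-z) + l\<^sup>2(1-z)\<^sup>2/2\<close> give \<open>log M\<^sub>l \<le> l\<^sup>2 (2(tm)\<^sup>2 + (M\<^sub>1 - 1) + (M\<^sub>2 - 1))\<close>.
  Since \<open>n\<^sub>k log M\<^sub>1\<close> and \<open>n\<^sub>k log M\<^sub>2\<close> converge, \<open>M\<^sub>1 - 1\<close> and \<open>M\<^sub>2 - 1\<close> are \<open>O(1/n\<^sub>k)\<close>.
  So is \<open>t\<^sup>2\<close>: the centred Laplace transform of the annealed law of \<open>\<eta>\<^sub>0\<close> satisfies
  \<open>M\<^sub>1 \<ge> 1 + H t\<^sup>2\<close> with \<open>H > 0\<close>, unless \<open>\<eta>\<^sub>0\<close> is annealed-a.s. constant, which would force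
  \<open>f(1,\<lambda>) = 0\<close>. Only the positivity of \<open>f(1,\<lambda>)\<close> and the eventual positivity of \<open>a\<^sub>n\<close> are used.\<close>

lemma one_minus_power_le_quadratic:
  fixes w :: real
  assumes "0 \<le> w" "w \<le> 1"
  shows "(1 - w) ^ l \<le> 1 - real l * w + (real l)\<^sup>2 / 2 * w\<^sup>2"
proof (induction l)
  case 0
  then show ?case by simp
next
  case (Suc l)
  have "(1 - w) ^ Suc l \<le> (1 - w) * (1 - real l * w + (real l)\<^sup>2 / 2 * w\<^sup>2)"
    using Suc assms by (simp add: mult_left_mono)
  also have "\<dots> = 1 - real (Suc l) * w + (real (Suc l))\<^sup>2 / 2 * w\<^sup>2
                   - w\<^sup>2 / 2 - (real l)\<^sup>2 / 2 * w ^ 3"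
    by (simp add: field_simps power2_eq_square power3_eq_cube)
  also have "\<dots> \<le> 1 - real (Suc l) * w + (real (Suc l))\<^sup>2 / 2 * w\<^sup>2"
  proof -
    have "0 \<le> (real l)\<^sup>2 / 2 * w ^ 3" using assms by simp
    then show ?thesis using zero_le_power2[of w] by linarith
  qed
  finally show ?case .
qed

lemma exp_centred_le:
  fixes t u m :: real
  assumes "0 \<le> t" "0 \<le> u"
  shows "exp (- t * (u - m)) \<le> exp (t * m)"
  using assms by (simp add: algebra_simps mult_nonneg_nonneg)

lemma exp_centred_ge_quadratic:
  fixes t y :: real
  assumes "0 \<le> t"
  shows "t\<^sup>2 * (min y 0)\<^sup>2 / 2 \<le> exp (- t * y) - 1 + t * y"
proof (cases "0 \<le> y")
  case True
  then show ?thesis using exp_ge_add_one_self[of "- t * y"] by simp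
next
  case False
  then have "1 + (- t * y) + (- t * y)\<^sup>2 / 2 \<le> exp (- t * y)"
    using assms by (intro exp_lower_Taylor_quadratic) (simp add: mult_nonneg_nonpos)
  then show ?thesis using False by (simp add: power_mult_distrib)
qed

lemma convex_on_power_pos: "convex_on {0<..} (\<lambda>x::real. x ^ l)"
proof (cases "even l")
  case True
  then show ?thesis using convex_power_even convex_on_subset by blast
next
  case False
  show ?thesis using convex_power_odd[OF False] by (rule convex_on_subset) auto
qed

lemma mult_diff_one_le_of_mult_ln_le:
  fixes N M K :: real
  assumes "1 \<le> N" "1 \<le> M" "N * ln M \<le> K"
  shows "N * (M - 1) \<le> exp K * K"
proof -
  have ln_M: "0 \<le> ln M" using assms by simp
  then have "ln M \<le> K"
    using assms mult_right_mono[of 1 N "ln M"] by simp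
  have "M - 1 \<le> M * ln M"
    using ln_le_minus_one[of "1 / M"] assms by (simp add: ln_div field_simps)
  have "M \<le> exp K"
    using assms \<open>ln M \<le> K\<close> by (metis exp_le_cancel_iff exp_ln less_le_trans zero_less_one)
  have "N * (M - 1) \<le> M * (N * ln M)"
    using assms \<open>M - 1 \<le> M * ln M\<close> by (simp add: mult_left_mono mult.left_commute)
  also have "\<dots> \<le> exp K * K"
    using assms ln_M \<open>M \<le> exp K\<close> by (intro mult_mono) auto
  finally show ?thesis .
qed

lemma ln_le_of_binomial_moment_bound:
  fixes s M1 M2 Ml :: real and l :: nat
  assumes s: "0 \<le> s" and Ml: "0 < Ml" and M1: "1 \<le> M1" and M2: "1 \<le> M2" and l: "1 \<le> l"
    and bound: "exp (- (real l * s)) * Ml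
      \<le> 1 - real l * (1 - exp (- s) * M1) + (real l)\<^sup>2 / 2 * (1 - 2 * exp (- s) * M1 + (exp (- s))\<^sup>2 * M2)"
  shows "ln Ml \<le> (real l)\<^sup>2 * (2 * s\<^sup>2 + (M1 - 1) + (M2 - 1))"
proof -
  define e where "e = exp (- s)"
  have e: "0 < e" "e \<le> 1" "1 - s \<le> e" "e * (1 + s) \<le> 1"
    using s exp_ge_add_one_self[of "- s"] exp_ge_add_one_self[of s]
    by (auto simp: e_def exp_minus field_simps)
  define A where "A = s - 1 + e * M1"
  define B where "B = 1 - 2 * e * M1 + e\<^sup>2 * M2"
  have "ln Ml = real l * s + ln (exp (- (real l * s)) * Ml)"
    using Ml by (simp add: ln_mult)
  also have "\<dots> \<le> real l * s + (exp (- (real l * s)) * Ml - 1)"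
    using Ml by (simp add: ln_le_minus_one)
  also have "\<dots> \<le> real l * A + (real l)\<^sup>2 / 2 * B"
    using bound by (simp add: A_def B_def e_def algebra_simps)
  also have "\<dots> \<le> real l * (s\<^sup>2 + (M1 - 1)) + (real l)\<^sup>2 / 2 * (s\<^sup>2 + (M2 - 1))"
  proof (intro add_mono mult_left_mono)
    have "A = (s - 1 + e) + e * (M1 - 1)" by (simp add: A_def algebra_simps)
    also have "\<dots> \<le> s * (1 - e) + 1 * (M1 - 1)"
      using e M1 by (intro add_mono mult_right_mono) (auto simp: algebra_simps)
    also have "\<dots> \<le> s\<^sup>2 + (M1 - 1)"
      using e s by (simp add: power2_eq_square mult_left_mono)
    finally show "A \<le> s\<^sup>2 + (M1 - 1)" .
    have "B = (1 - e)\<^sup>2 - 2 * e * (M1 - 1) + e\<^sup>2 * (M2 - 1)"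
      by (simp add: B_def power2_eq_square algebra_simps)
    also have "\<dots> \<le> s\<^sup>2 - 0 + 1 * (M2 - 1)"
    proof (intro add_mono diff_mono mult_right_mono)
      show "(1 - e)\<^sup>2 \<le> s\<^sup>2" using e by (intro power_mono) auto
      show "0 \<le> 2 * e * (M1 - 1)" using e M1 by simp
      show "e\<^sup>2 \<le> 1" using e by (simp add: power_le_one)
    qed (use M2 in auto)
    finally show "B \<le> s\<^sup>2 + (M2 - 1)" by simp
  qed auto
  also have "\<dots> \<le> (real l)\<^sup>2 * (2 * s\<^sup>2 + (M1 - 1) + (M2 - 1))"
  proof -
    have "real l \<le> (real l)\<^sup>2" using l by (simp add: power2_eq_square)
    then have "real l * (s\<^sup>2 + (M1 - 1)) \<le> (real l)\<^sup>2 * (s\<^sup>2 + (M1 - 1))"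
      using M1 by (intro mult_right_mono) auto
    moreover have "(real l)\<^sup>2 / 2 * (s\<^sup>2 + (M2 - 1)) \<le> (real l)\<^sup>2 * (s\<^sup>2 + (M2 - 1))"
      using M2 by (simp add: mult_right_mono)
    ultimately show ?thesis by (simp add: algebra_simps)
  qed
  finally show ?thesis .
qed

lemma
  fixes f :: "'b \<Rightarrow> real"
  assumes N [measurable]: "N \<in> M \<rightarrow>\<^sub>M subprob_algebra B" and M: "space M \<noteq> {}"
    and f [measurable]: "f \<in> borel_measurable B" and f_nonneg: "\<And>y. y \<in> space B \<Longrightarrow> 0 \<le> f y"
    and finite: "(\<integral>\<^sup>+x. \<integral>\<^sup>+y. f y \<partial>N x \<partial>M) < \<infinity>"
  shows integrable_bind_nonneg: "integrable (M \<bind> N) f"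
    and integral_bind_nonneg: "(\<integral>y. f y \<partial>(M \<bind> N)) = (\<integral>x. \<integral>y. f y \<partial>N x \<partial>M)"
proof -
  have space_bind: "space (M \<bind> N) = space B"
    by (rule space_bind_measurable[OF N M])
  have f_bind: "f \<in> borel_measurable (M \<bind> N)"
    using sets_bind[OF sets_kernel[OF N] M] f by (simp cong: measurable_cong_sets)
  have nn_bind: "(\<integral>\<^sup>+y. f y \<partial>(M \<bind> N)) = (\<integral>\<^sup>+x. \<integral>\<^sup>+y. f y \<partial>N x \<partial>M)"
    by (rule nn_integral_bind[OF _ N]) measurable
  show "integrable (M \<bind> N) f"
    using f_bind f_nonneg finite nn_bind space_bind by (intro integrableI_nonneg) auto
  have inner: "(\<integral>\<^sup>+y. f y \<partial>N x) = ennreal (\<integral>y. f y \<partial>N x)"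
    if x: "x \<in> space M" and fin: "(\<integral>\<^sup>+y. f y \<partial>N x) \<noteq> \<infinity>" for x
  proof -
    have sets_Nx: "sets (N x) = sets B" by (rule sets_kernel[OF N x])
    have "f \<in> borel_measurable (N x)" using sets_Nx f by (simp cong: measurable_cong_sets)
    moreover have "\<forall>y\<in>space (N x). 0 \<le> f y"
      using f_nonneg sets_eq_imp_space_eq[OF sets_Nx] by simp
    ultimately show ?thesis
      using fin by (intro nn_integral_eq_integral integrableI_nonneg) (auto simp: top.not_eq_extremum)
  qed
  have "AE x in M. (\<integral>\<^sup>+y. f y \<partial>N x) \<noteq> \<infinity>"
    using finite by (intro nn_integral_PInf_AE) auto
  then have "AE x in M. (\<integral>\<^sup>+y. f y \<partial>N x) = ennreal (\<integral>y. f y \<partial>N x)"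
    by (rule AE_mp) (auto intro!: AE_I2 inner)
  moreover have "AE x in M. 0 \<le> (\<integral>y. f y \<partial>N x)"
    using f_nonneg sets_kernel[OF N]
    by (intro AE_I2 integral_nonneg_AE) (auto dest: sets_eq_imp_space_eq)
  ultimately have "(\<integral>x. \<integral>y. f y \<partial>N x \<partial>M) = enn2real (\<integral>\<^sup>+x. \<integral>\<^sup>+y. f y \<partial>N x \<partial>M)"
    by (intro enn2real_nn_integral_eq_integral[symmetric]) measurable
  also have "\<dots> = (\<integral>y. f y \<partial>(M \<bind> N))"
    using f_bind f_nonneg space_bind by (subst integral_eq_nn_integral) (auto simp: nn_bind)
  finally show "(\<integral>y. f y \<partial>(M \<bind> N)) = (\<integral>x. \<integral>y. f y \<partial>N x \<partial>M)" ..
qed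

lemma (in prob_space) expectation_exp_centred_ge_quadratic:
  fixes X :: "'a \<Rightarrow> real"
  assumes X: "integrable M X" and X_nonneg: "AE x in M. 0 \<le> X x"
  shows "(\<exists>H>0. \<forall>t\<ge>0. 1 + t\<^sup>2 * H \<le> expectation (\<lambda>x. exp (- t * (X x - expectation X))))
         \<or> (AE x in M. X x = expectation X)"
proof -
  define m where "m = expectation X"
  define h where "h x = (min (X x - m) 0)\<^sup>2" for x
  have m_nonneg: "0 \<le> m" unfolding m_def using X_nonneg by (rule integral_nonneg_AE)
  have X_meas [measurable]: "X \<in> borel_measurable M" using X by auto
  have h: "integrable M h"
  proof (rule integrable_const_bound[where B = "m\<^sup>2"])
    show "AE x in M. norm (h x) \<le> m\<^sup>2"
      using X_nonneg by eventually_elim (use m_nonneg in \<open>auto simp: h_def min_def abs_le_square_iff[symmetric]\<close>)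
  qed (unfold h_def, measurable)
  have centred: "integrable M (\<lambda>x. X x - m)" "expectation (\<lambda>x. X x - m) = 0"
    using X by (auto simp: m_def prob_space)
  have exp_int: "integrable M (\<lambda>x. exp (- t * (X x - m)))" if "0 \<le> t" for t
  proof (rule integrable_const_bound[where B = "exp (t * m)"])
    show "AE x in M. norm (exp (- t * (X x - m))) \<le> exp (t * m)"
      using X_nonneg
    proof eventually_elim
      case (elim x)
      then show ?case using exp_centred_le[OF that elim] by simp
    qed
  qed simp
  define H where "H = expectation h / 2"
  have lower: "t\<^sup>2 * H \<le> expectation (\<lambda>x. exp (- t * (X x - m))) - 1" if t: "0 \<le> t" for t
  proof -
    have "t\<^sup>2 * H = expectation (\<lambda>x. t\<^sup>2 * h x / 2)" by (simp add: H_def)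
    also have "\<dots> \<le> expectation (\<lambda>x. exp (- t * (X x - m)) - 1 + t * (X x - m))"
      using h[unfolded h_def] exp_int[OF t] centred(1) exp_centred_ge_quadratic[OF t]
      by (intro integral_mono integrable_divide_zero integrable_mult_right) (auto simp: h_def)
    also have "\<dots> = expectation (\<lambda>x. exp (- t * (X x - m))) - 1"
      using exp_int[OF t] centred by (simp add: prob_space)
    finally show ?thesis .
  qed
  show ?thesis
  proof (cases "H = 0")
    case False
    have "0 \<le> H" unfolding H_def h_def by (simp add: integral_nonneg_AE)
    then have "\<forall>t\<ge>0. 1 + t\<^sup>2 * H \<le> expectation (\<lambda>x. exp (- t * (X x - m)))"
      using lower by (simp add: algebra_simps)
    with False \<open>0 \<le> H\<close> show ?thesis unfolding m_def by (metis order_less_le)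
  next
    case True
    then have "AE x in M. h x = 0"
      using h by (subst integral_nonneg_eq_0_iff_AE[symmetric]) (auto simp: H_def h_def)
    then have "AE x in M. 0 \<le> X x - m"
      by eventually_elim (simp add: h_def min_def split: if_splits)
    then have "AE x in M. X x - m = 0"
      using centred by (subst integral_nonneg_eq_0_iff_AE[symmetric]) auto
    then show ?thesis unfolding m_def by auto
  qed
qed

lemma space_pos_line: "space pos_line = {0<..}"
  by (simp add: pos_line_def space_restrict_space)

lemma borel_measurable_pos_line: "f \<in> borel_measurable borel \<Longrightarrow> f \<in> borel_measurable pos_line"
  unfolding pos_line_def by (rule measurable_restrict_space1)

definition quenched_laplace :: "real measure measure \<Rightarrow> real \<Rightarrow> real measure \<Rightarrow> real" where
  "quenched_laplace \<pi> t \<mu> = (\<integral>u. exp (- t * (u - annealed_mean \<pi>)) \<partial>\<mu>)"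

definition annealed_law :: "real measure measure \<Rightarrow> real measure" where
  "annealed_law \<pi> = \<pi> \<bind> (\<lambda>\<mu>. \<mu>)"

lemma lap_moment_eq_integral_quenched_laplace:
  "lap_moment \<pi> a lam l = (\<integral>\<mu>. quenched_laplace \<pi> (lam / a) \<mu> ^ l \<partial>\<pi>)"
  by (simp add: lap_moment_def quenched_laplace_def)

context
  fixes \<pi> :: "real measure measure"
  assumes pi_law: "\<pi> \<in> space (prob_algebra (prob_algebra pos_line))"
begin

lemma prob_space_environment: "prob_space \<pi>"
  and sets_environment: "sets \<pi> = sets (prob_algebra pos_line)"
  using pi_law by (auto simp: space_prob_algebra)

lemma environment_in_space:
  assumes "\<mu> \<in> space \<pi>"
  shows "prob_space \<mu>" "sets \<mu> = sets pos_line" "space \<mu> = {0<..}"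
proof -
  have "\<mu> \<in> space (prob_algebra pos_line)"
    using assms sets_eq_imp_space_eq[OF sets_environment] by simp
  then show "prob_space \<mu>" and sets_\<mu>: "sets \<mu> = sets pos_line"
    by (auto simp: space_prob_algebra)
  show "space \<mu> = {0<..}"
    using sets_eq_imp_space_eq[OF sets_\<mu>] by (simp add: space_pos_line)
qed

lemma measurable_environment_kernel: "(\<lambda>\<mu>. \<mu>) \<in> \<pi> \<rightarrow>\<^sub>M subprob_algebra pos_line"
  by (rule measurable_prob_algebraD[OF measurable_ident_sets[OF sets_environment]])

lemma annealed_mean_nonneg: "0 \<le> annealed_mean \<pi>"
  unfolding annealed_mean_def
  by (intro integral_nonneg_AE AE_I2) (auto simp: environment_in_space(3))

lemma measurable_quenched_laplace: "(\<lambda>\<mu>. quenched_laplace \<pi> t \<mu>) \<in> borel_measurable \<pi>"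
proof -
  have "(\<lambda>u. exp (- t * (u - annealed_mean \<pi>))) \<in> borel_measurable pos_line"
    by (rule borel_measurable_pos_line) measurable
  then show ?thesis
    unfolding quenched_laplace_def
    by (rule measurable_compose[OF measurable_environment_kernel integral_measurable_subprob_algebra])
qed

lemma quenched_laplace_bounds:
  assumes \<mu>: "\<mu> \<in> space \<pi>" and t: "0 \<le> t"
  shows "0 < quenched_laplace \<pi> t \<mu>" "quenched_laplace \<pi> t \<mu> \<le> exp (t * annealed_mean \<pi>)"
proof -
  interpret prob_space \<mu> using environment_in_space(1)[OF \<mu>] .
  have "(\<lambda>u. exp (- t * (u - annealed_mean \<pi>))) \<in> borel_measurable \<mu>"
    by (subst measurable_cong_sets[OF environment_in_space(2)[OF \<mu>] refl])
       (rule borel_measurable_pos_line, measurable)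
  moreover have bound: "exp (- t * (u - annealed_mean \<pi>)) \<le> exp (t * annealed_mean \<pi>)"
    if "u \<in> space \<mu>" for u
    using exp_centred_le[OF t] that environment_in_space(3)[OF \<mu>] by simp
  ultimately have int: "integrable \<mu> (\<lambda>u. exp (- t * (u - annealed_mean \<pi>)))"
    by (intro integrable_const_bound[where B = "exp (t * annealed_mean \<pi>)"]) auto
  show "0 < quenched_laplace \<pi> t \<mu>"
    unfolding quenched_laplace_def using int by (intro expectation_greater) auto
  show "quenched_laplace \<pi> t \<mu> \<le> exp (t * annealed_mean \<pi>)"
    unfolding quenched_laplace_def using int bound
    by (intro integral_le_const) (auto intro!: AE_I2)
qed

lemma integrable_quenched_laplace_power:
  assumes "0 \<le> t"
  shows "integrable \<pi> (\<lambda>\<mu>. quenched_laplace \<pi> t \<mu> ^ l)"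
proof -
  interpret prob_space \<pi> by (rule prob_space_environment)
  show ?thesis
  proof (rule integrable_const_bound[where B = "exp (t * annealed_mean \<pi>) ^ l"])
    show "AE \<mu> in \<pi>. norm (quenched_laplace \<pi> t \<mu> ^ l) \<le> exp (t * annealed_mean \<pi>) ^ l"
    proof (rule AE_I2)
      fix \<mu> assume "\<mu> \<in> space \<pi>"
      from quenched_laplace_bounds[OF this assms]
      show "norm (quenched_laplace \<pi> t \<mu> ^ l) \<le> exp (t * annealed_mean \<pi>) ^ l"
        by (simp add: power_abs power_mono)
    qed
  qed (use measurable_quenched_laplace in measurable)
qed

lemma lap_moment_pos:
  assumes "0 \<le> lam / a"
  shows "0 < lap_moment \<pi> a lam l"
proof -
  interpret prob_space \<pi> by (rule prob_space_environment)
  show ?thesis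
    unfolding lap_moment_eq_integral_quenched_laplace
    using integrable_quenched_laplace_power[OF assms] quenched_laplace_bounds(1)[OF _ assms]
    by (intro expectation_greater) (auto intro!: AE_I2)
qed

lemma lap_moment_power_le:
  assumes "0 \<le> lam / a"
  shows "lap_moment \<pi> a lam 1 ^ l \<le> lap_moment \<pi> a lam l"
proof -
  interpret prob_space \<pi> by (rule prob_space_environment)
  have "expectation (quenched_laplace \<pi> (lam / a)) ^ l
      \<le> expectation (\<lambda>\<mu>. quenched_laplace \<pi> (lam / a) \<mu> ^ l)"
    using integrable_quenched_laplace_power[OF assms, of 1]
      integrable_quenched_laplace_power[OF assms, of l]
      quenched_laplace_bounds(1)[OF _ assms] convex_on_power_pos
    by (intro jensens_inequality[where I = "{0<..}"]) (auto intro!: AE_I2)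
  then show ?thesis
    unfolding lap_moment_eq_integral_quenched_laplace by simp
qed

lemma lap_moment_binomial_bound:
  assumes t: "0 \<le> lam / a"
  defines "s \<equiv> lam / a * annealed_mean \<pi>"
  shows "exp (- (real l * s)) * lap_moment \<pi> a lam l
    \<le> 1 - real l * (1 - exp (- s) * lap_moment \<pi> a lam 1)
       + (real l)\<^sup>2 / 2 * (1 - 2 * exp (- s) * lap_moment \<pi> a lam 1
                              + (exp (- s))\<^sup>2 * lap_moment \<pi> a lam 2)"
proof -
  interpret prob_space \<pi> by (rule prob_space_environment)
  define Q where "Q = quenched_laplace \<pi> (lam / a)"
  define e where "e = exp (- s)"
  have Q_int: "integrable \<pi> (\<lambda>\<mu>. Q \<mu> ^ k)" for k
    unfolding Q_def by (rule integrable_quenched_laplace_power[OF t])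
  have e_Q: "e * Q \<mu> \<le> 1" "0 < e * Q \<mu>" if "\<mu> \<in> space \<pi>" for \<mu>
    using quenched_laplace_bounds[OF that t]
    by (auto simp: Q_def e_def s_def exp_minus field_simps)
  have pointwise: "exp (- (real l * s)) * Q \<mu> ^ l
      \<le> (1 - real l + (real l)\<^sup>2 / 2) + (real l * e - (real l)\<^sup>2 * e) * Q \<mu>
         + (real l)\<^sup>2 / 2 * e\<^sup>2 * Q \<mu> ^ 2" if "\<mu> \<in> space \<pi>" for \<mu>
  proof -
    have "exp (- (real l * s)) * Q \<mu> ^ l = (1 - (1 - e * Q \<mu>)) ^ l"
      by (simp add: e_def power_mult_distrib exp_of_nat_mult[symmetric])
    also have "\<dots> \<le> 1 - real l * (1 - e * Q \<mu>) + (real l)\<^sup>2 / 2 * (1 - e * Q \<mu>)\<^sup>2"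
      using e_Q[OF that] by (intro one_minus_power_le_quadratic) auto
    also have "\<dots> = (1 - real l + (real l)\<^sup>2 / 2) + (real l * e - (real l)\<^sup>2 * e) * Q \<mu>
         + (real l)\<^sup>2 / 2 * e\<^sup>2 * Q \<mu> ^ 2"
      by (simp add: power2_eq_square algebra_simps)
    finally show ?thesis .
  qed
  have "exp (- (real l * s)) * lap_moment \<pi> a lam l
      = expectation (\<lambda>\<mu>. exp (- (real l * s)) * Q \<mu> ^ l)"
    by (simp add: lap_moment_eq_integral_quenched_laplace Q_def)
  also have "\<dots> \<le> expectation (\<lambda>\<mu>. (1 - real l + (real l)\<^sup>2 / 2) + (real l * e - (real l)\<^sup>2 * e) * Q \<mu>
         + (real l)\<^sup>2 / 2 * e\<^sup>2 * Q \<mu> ^ 2)"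
    using Q_int[of 1] Q_int[of 2] Q_int[of l] pointwise by (intro integral_mono) auto
  also have "\<dots> = (1 - real l + (real l)\<^sup>2 / 2) + (real l * e - (real l)\<^sup>2 * e) * lap_moment \<pi> a lam 1
         + (real l)\<^sup>2 / 2 * e\<^sup>2 * lap_moment \<pi> a lam 2"
    using Q_int[of 1] Q_int[of 2]
    by (simp add: lap_moment_eq_integral_quenched_laplace Q_def prob_space)
  finally show ?thesis
    by (simp add: e_def power2_eq_square algebra_simps)
qed

lemma ln_lap_moment_ge:
  assumes "0 \<le> lam / a"
  shows "real l * ln (lap_moment \<pi> a lam 1) \<le> ln (lap_moment \<pi> a lam l)"
  using lap_moment_power_le[OF assms, of l] lap_moment_pos[OF assms]
  by (simp add: ln_realpow[symmetric])

lemma one_le_lap_moment_two: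
  assumes t: "0 \<le> lam / a" and M1: "1 \<le> lap_moment \<pi> a lam 1"
  shows "1 \<le> lap_moment \<pi> a lam 2"
proof -
  have "1 \<le> lap_moment \<pi> a lam 1 ^ 2" using M1 by simp
  also have "\<dots> \<le> lap_moment \<pi> a lam 2" by (rule lap_moment_power_le[OF t])
  finally show ?thesis .
qed

lemma ln_lap_moment_le:
  assumes t: "0 \<le> lam / a" and M1: "1 \<le> lap_moment \<pi> a lam 1" and l: "1 \<le> l"
  shows "ln (lap_moment \<pi> a lam l)
    \<le> (real l)\<^sup>2 * (2 * (lam / a * annealed_mean \<pi>)\<^sup>2
                     + (lap_moment \<pi> a lam 1 - 1) + (lap_moment \<pi> a lam 2 - 1))"
proof (rule ln_le_of_binomial_moment_bound[OF _ lap_moment_pos[OF t] M1 _ l])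
  show "0 \<le> lam / a * annealed_mean \<pi>" by (rule mult_nonneg_nonneg[OF t annealed_mean_nonneg])
qed (rule one_le_lap_moment_two[OF t M1] lap_moment_binomial_bound[OF t])+

lemma prob_space_annealed_law: "prob_space (annealed_law \<pi>)"
  and sets_annealed_law: "sets (annealed_law \<pi>) = sets pos_line"
  unfolding annealed_law_def
  using prob_space_bind'[OF pi_law measurable_ident_sets[OF refl]]
    sets_bind'[OF pi_law measurable_ident_sets[OF refl]]
  by auto

lemma space_annealed_law: "space (annealed_law \<pi>) = {0<..}"
  using sets_eq_imp_space_eq[OF sets_annealed_law] by (simp add: space_pos_line)

lemma borel_measurable_annealed_law:
  "f \<in> borel_measurable borel \<Longrightarrow> f \<in> borel_measurable (annealed_law \<pi>)"
  by (subst measurable_cong_sets[OF sets_annealed_law refl]) (rule borel_measurable_pos_line)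

lemma annealed_law_mean:
  assumes "(\<integral>\<^sup>+\<mu>. (\<integral>\<^sup>+u. ennreal u \<partial>\<mu>) \<partial>\<pi>) < \<infinity>"
  shows "integrable (annealed_law \<pi>) (\<lambda>u. u)" "(\<integral>u. u \<partial>annealed_law \<pi>) = annealed_mean \<pi>"
proof -
  have \<pi>: "space \<pi> \<noteq> {}" by (rule prob_space.not_empty[OF prob_space_environment])
  have u: "(\<lambda>u. u) \<in> borel_measurable pos_line" by (rule borel_measurable_pos_line) simp
  have u_nonneg: "\<And>u. u \<in> space pos_line \<Longrightarrow> 0 \<le> u" by (simp add: space_pos_line)
  show "integrable (annealed_law \<pi>) (\<lambda>u. u)" "(\<integral>u. u \<partial>annealed_law \<pi>) = annealed_mean \<pi>"
    unfolding annealed_law_def annealed_mean_def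
    using integrable_bind_nonneg[OF measurable_environment_kernel \<pi> u u_nonneg assms]
      integral_bind_nonneg[OF measurable_environment_kernel \<pi> u u_nonneg assms]
    by simp_all
qed

lemma lap_moment_one_eq_annealed:
  assumes t: "0 \<le> lam / a"
  shows "lap_moment \<pi> a lam 1 = (\<integral>u. exp (- (lam / a) * (u - annealed_mean \<pi>)) \<partial>annealed_law \<pi>)"
proof -
  have "\<bar>exp (- (lam / a) * (u - annealed_mean \<pi>))\<bar> \<le> exp (lam / a * annealed_mean \<pi>)"
    if "u \<in> space pos_line" for u
    using exp_centred_le[OF t, of u] that by (simp add: space_pos_line)
  then show ?thesis
    unfolding annealed_law_def lap_moment_def
    using prob_space_environment[THEN prob_space.axioms(1)] environment_in_space(1)
    by (subst integral_bind[OF _ _ measurable_environment_kernel, where B' = 1])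
       (auto intro!: AE_I2 borel_measurable_pos_line simp: prob_space.emeasure_space_1)
qed

lemma lap_moment_one_dichotomy:
  assumes finite_mean: "(\<integral>\<^sup>+\<mu>. (\<integral>\<^sup>+u. ennreal u \<partial>\<mu>) \<partial>\<pi>) < \<infinity>"
  shows "(\<exists>H>0. \<forall>a lam. 0 \<le> lam / a \<longrightarrow> 1 + (lam / a)\<^sup>2 * H \<le> lap_moment \<pi> a lam 1)
       \<or> (\<forall>a lam. 0 \<le> lam / a \<longrightarrow> lap_moment \<pi> a lam 1 = 1)"
proof -
  interpret \<nu>: prob_space "annealed_law \<pi>" by (rule prob_space_annealed_law)
  have "AE u in annealed_law \<pi>. 0 \<le> u" by (intro AE_I2) (simp add: space_annealed_law)
  from \<nu>.expectation_exp_centred_ge_quadratic[OF annealed_law_mean(1)[OF finite_mean] this]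
  show ?thesis
    unfolding annealed_law_mean(2)[OF finite_mean]
  proof
    assume "\<exists>H>0. \<forall>t\<ge>0. 1 + t\<^sup>2 * H
      \<le> \<nu>.expectation (\<lambda>u. exp (- t * (u - annealed_mean \<pi>)))"
    then obtain H where "0 < H"
      and H: "\<And>t. 0 \<le> t \<Longrightarrow> 1 + t\<^sup>2 * H \<le> \<nu>.expectation (\<lambda>u. exp (- t * (u - annealed_mean \<pi>)))"
      by blast
    have "1 + (lam / a)\<^sup>2 * H \<le> lap_moment \<pi> a lam 1" if "0 \<le> lam / a" for a lam
      unfolding lap_moment_one_eq_annealed[OF that] by (rule H[OF that])
    with \<open>0 < H\<close> show ?thesis by blast
  next
    assume degenerate: "AE u in annealed_law \<pi>. u = annealed_mean \<pi>"
    have "lap_moment \<pi> a lam 1 = \<nu>.expectation (\<lambda>u. 1)" if "0 \<le> lam / a" for a lam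
      unfolding lap_moment_one_eq_annealed[OF that] using degenerate
      by (intro integral_cong_AE borel_measurable_annealed_law) (auto elim: eventually_mono)
    then show ?thesis by (simp add: \<nu>.prob_space)
  qed
qed

lemma scaled_ln_lap_moment_ge:
  fixes N c :: real
  assumes t: "0 \<le> lam / a" and N: "0 \<le> N" and c: "c \<le> N * ln (lap_moment \<pi> a lam 1)"
  shows "c * real l \<le> N * ln (lap_moment \<pi> a lam l)"
proof -
  have "c * real l \<le> N * (real l * ln (lap_moment \<pi> a lam 1))"
    using mult_right_mono[OF c, of "real l"] by (simp add: mult_ac)
  also have "\<dots> \<le> N * ln (lap_moment \<pi> a lam l)"
    by (rule mult_left_mono[OF ln_lap_moment_ge[OF t] N])
  finally show ?thesis .
qed

lemma scaled_ln_lap_moment_le: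
  fixes N K1 K2 H :: real
  assumes t: "0 \<le> lam / a" and H: "0 < H" "1 + (lam / a)\<^sup>2 * H \<le> lap_moment \<pi> a lam 1"
    and N: "1 \<le> N" and K1: "N * ln (lap_moment \<pi> a lam 1) \<le> K1"
    and K2: "N * ln (lap_moment \<pi> a lam 2) \<le> K2" and l: "1 \<le> l"
  shows "N * ln (lap_moment \<pi> a lam l)
    \<le> (2 * (annealed_mean \<pi>)\<^sup>2 * (exp K1 * K1) / H + exp K1 * K1 + exp K2 * K2) * (real l)\<^sup>2"
proof -
  define t where "t = lam / a"
  define m where "m = annealed_mean \<pi>"
  define M1 where "M1 = lap_moment \<pi> a lam 1"
  define M2 where "M2 = lap_moment \<pi> a lam 2"
  have "0 \<le> t\<^sup>2 * H" using H by simp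
  then have M1: "1 \<le> M1" using H unfolding M1_def t_def by linarith
  have M2: "1 \<le> M2" unfolding M1_def M2_def by (rule one_le_lap_moment_two[OF t M1[unfolded M1_def]])
  have B1: "N * (M1 - 1) \<le> exp K1 * K1"
    using N M1 K1 unfolding M1_def by (rule mult_diff_one_le_of_mult_ln_le)
  have B2: "N * (M2 - 1) \<le> exp K2 * K2"
    using N M2 K2 unfolding M2_def by (rule mult_diff_one_le_of_mult_ln_le)
  have "(N * t\<^sup>2) * H \<le> N * (M1 - 1)"
    using H N by (simp add: M1_def t_def mult.assoc mult_left_mono)
  then have "N * t\<^sup>2 \<le> exp K1 * K1 / H"
    using B1 H by (simp add: pos_le_divide_eq)
  then have "2 * m\<^sup>2 * (N * t\<^sup>2) \<le> 2 * m\<^sup>2 * (exp K1 * K1 / H)"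
    by (rule mult_left_mono) simp
  then have S: "N * (2 * (t * m)\<^sup>2) \<le> 2 * m\<^sup>2 * (exp K1 * K1) / H"
    by (simp add: power_mult_distrib mult_ac)
  have "N * ln (lap_moment \<pi> a lam l) \<le> N * ((real l)\<^sup>2 * (2 * (t * m)\<^sup>2 + (M1 - 1) + (M2 - 1)))"
    using ln_lap_moment_le[OF t M1[unfolded M1_def] l] N
    by (simp add: t_def m_def M1_def M2_def mult_left_mono)
  also have "\<dots> = (N * (2 * (t * m)\<^sup>2) + N * (M1 - 1) + N * (M2 - 1)) * (real l)\<^sup>2"
    by (simp add: algebra_simps)
  also have "\<dots> \<le> (2 * m\<^sup>2 * (exp K1 * K1) / H + exp K1 * K1 + exp K2 * K2) * (real l)\<^sup>2"
    using S B1 B2 by (intro mult_right_mono add_mono) auto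
  finally show ?thesis by (simp add: m_def)
qed

lemma lap_moment_growth_bounds:
  fixes a N :: "nat \<Rightarrow> real" and c1 c2 :: real
  assumes finite_mean: "(\<integral>\<^sup>+\<mu>. (\<integral>\<^sup>+u. ennreal u \<partial>\<mu>) \<partial>\<pi>) < \<infinity>"
    and t: "\<forall>\<^sub>F k in sequentially. 0 \<le> lam / a k" and N: "\<forall>\<^sub>F k in sequentially. 1 \<le> N k"
    and lim1: "(\<lambda>k. N k * ln (lap_moment \<pi> (a k) lam 1)) \<longlonglongrightarrow> c1" and c1: "0 < c1"
    and lim2: "(\<lambda>k. N k * ln (lap_moment \<pi> (a k) lam 2)) \<longlonglongrightarrow> c2"
  shows "\<exists>c C. 0 < c \<and> 0 < C \<and> (\<forall>\<^sub>F k in sequentially. \<forall>l\<ge>1.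
           c * real l \<le> N k * ln (lap_moment \<pi> (a k) lam l) \<and>
           N k * ln (lap_moment \<pi> (a k) lam l) \<le> C * (real l)\<^sup>2)"
proof -
  define K1 where "K1 = c1 + 1"
  define K2 where "K2 = \<bar>c2\<bar> + 1"
  have "\<forall>\<^sub>F k in sequentially. c1 / 2 < N k * ln (lap_moment \<pi> (a k) lam 1)
      \<and> N k * ln (lap_moment \<pi> (a k) lam 1) < K1 \<and> N k * ln (lap_moment \<pi> (a k) lam 2) < K2"
    unfolding K1_def K2_def using lim1 lim2 c1 by (intro eventually_conj order_tendstoD) auto
  with t N have ev: "\<forall>\<^sub>F k in sequentially. 0 \<le> lam / a k \<and> 1 \<le> N k
      \<and> c1 / 2 \<le> N k * ln (lap_moment \<pi> (a k) lam 1)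
      \<and> N k * ln (lap_moment \<pi> (a k) lam 1) \<le> K1 \<and> N k * ln (lap_moment \<pi> (a k) lam 2) \<le> K2"
    by eventually_elim auto
  obtain H where H: "0 < H" "\<And>a lam. 0 \<le> lam / a \<Longrightarrow> 1 + (lam / a)\<^sup>2 * H \<le> lap_moment \<pi> a lam 1"
    using lap_moment_one_dichotomy[OF finite_mean] eventually_happens'[OF _ ev] c1 by force
  define C where "C = 2 * (annealed_mean \<pi>)\<^sup>2 * (exp K1 * K1) / H + exp K1 * K1 + exp K2 * K2"
  have "0 \<le> 2 * (annealed_mean \<pi>)\<^sup>2 * (exp K1 * K1) / H" "0 < exp K1 * K1" "0 \<le> exp K2 * K2"
    using H(1) c1 by (simp_all add: K1_def K2_def)
  then have "0 < C" unfolding C_def by linarith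
  moreover from ev have "\<forall>\<^sub>F k in sequentially. \<forall>l\<ge>1.
      c1 / 2 * real l \<le> N k * ln (lap_moment \<pi> (a k) lam l) \<and>
      N k * ln (lap_moment \<pi> (a k) lam l) \<le> C * (real l)\<^sup>2"
  proof eventually_elim
    case (elim k)
    show ?case
    proof (intro allI impI conjI)
      fix l :: nat assume "1 \<le> l"
      with elim show "c1 / 2 * real l \<le> N k * ln (lap_moment \<pi> (a k) lam l)"
        and "N k * ln (lap_moment \<pi> (a k) lam l) \<le> C * (real l)\<^sup>2"
        unfolding C_def by (intro scaled_ln_lap_moment_ge scaled_ln_lap_moment_le[OF _ H]; simp)+
    qed
  qed
  ultimately show ?thesis using c1 by (intro exI[of _ "c1 / 2"] exI[of _ C]) auto
qed

end

lemma eventually_scaling_pos: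
  fixes \<alpha> :: real
  assumes "slowly_varying L" and n: "filterlim n at_top sequentially"
  shows "\<forall>\<^sub>F k in sequentially. 1 \<le> real (n k) \<and> 0 < real (n k) powr (1 / \<alpha>) * L (real (n k))"
proof -
  have n_real: "filterlim (\<lambda>k. real (n k)) at_top sequentially"
    by (rule filterlim_compose[OF filterlim_real_sequentially n])
  have "\<forall>\<^sub>F k in sequentially. 0 < L (real (n k))"
    using assms(1) n_real unfolding slowly_varying_def filterlim_iff by blast
  moreover have "\<forall>\<^sub>F k in sequentially. 1 \<le> real (n k)"
    using n_real by (rule filterlim_at_top[THEN iffD1, rule_format])
  ultimately show ?thesis
    by eventually_elim simp
qed

theorem lemma3:
  fixes \<pi> :: "real measure measure"
    and \<alpha> :: real
    and f :: "nat \<Rightarrow> real \<Rightarrow> real"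
    and n :: "nat \<Rightarrow> nat"
    and L :: "real \<Rightarrow> real"
    and a :: "nat \<Rightarrow> real"
  assumes pi_law: "\<pi> \<in> space (prob_algebra (prob_algebra pos_line))"
    and finite_mean: "(\<integral>\<^sup>+\<mu>. (\<integral>\<^sup>+u. ennreal u \<partial>\<mu>) \<partial>\<pi>) < \<infinity>"
    and alpha: "1 < \<alpha>" "\<alpha> < 2"
    and f_asymp: "\<exists>c' C'. 0 < c' \<and> c' \<le> C' \<and>
                    (\<forall>lam>0. c' * lam powr \<alpha> \<le> f 1 lam \<and> f 1 lam \<le> C' * lam powr \<alpha>)"
    and n_mono: "mono n" and n_lim: "filterlim n at_top sequentially"
    and L_sv: "slowly_varying L"
    and a_def: "\<And>m. a m = real m powr (1 / \<alpha>) * L (real m)"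
    and conv: "\<And>l lam. l \<ge> 1 \<Longrightarrow> lam > 0 \<Longrightarrow>
       (\<lambda>k. real (n k) * ln (lap_moment \<pi> (a (n k)) lam l)) \<longlonglongrightarrow> f l lam"
  shows "\<forall>lam>0. \<exists>c C. 0 < c \<and> 0 < C \<and> (\<exists>K. \<forall>k\<ge>K. \<forall>l\<ge>1.
            c * real l \<le> real (n k) * ln (lap_moment \<pi> (a (n k)) lam l) \<and>
            real (n k) * ln (lap_moment \<pi> (a (n k)) lam l) \<le> C * (real l)\<^sup>2)"
proof (intro allI impI)
  fix lam :: real assume lam: "0 < lam"
  have f1: "0 < f 1 lam"
    using f_asymp lam by (smt (verit) mult_pos_pos powr_gt_zero)
  have "\<forall>\<^sub>F k in sequentially. 1 \<le> real (n k) \<and> 0 < a (n k)"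
    using eventually_scaling_pos[OF L_sv n_lim, of \<alpha>] by (simp add: a_def)
  then have "\<forall>\<^sub>F k in sequentially. 0 \<le> lam / a (n k)" "\<forall>\<^sub>F k in sequentially. 1 \<le> real (n k)"
    using lam by (auto elim: eventually_mono)
  then obtain c C where "0 < c" "0 < C" and "\<forall>\<^sub>F k in sequentially. \<forall>l\<ge>1.
      c * real l \<le> real (n k) * ln (lap_moment \<pi> (a (n k)) lam l) \<and>
      real (n k) * ln (lap_moment \<pi> (a (n k)) lam l) \<le> C * (real l)\<^sup>2"
    using lap_moment_growth_bounds[OF pi_law finite_mean _ _ conv[OF order_refl lam] f1
        conv[OF one_le_numeral lam]]
    by blast
  then show "\<exists>c C. 0 < c \<and> 0 < C \<and> (\<exists>K. \<forall>k\<ge>K. \<forall>l\<ge>1.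
            c * real l \<le> real (n k) * ln (lap_moment \<pi> (a (n k)) lam l) \<and>
            real (n k) * ln (lap_moment \<pi> (a (n k)) lam l) \<le> C * (real l)\<^sup>2)"
    unfolding eventually_sequentially by blast
qed

end
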